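(* Let $P,Q,N>0$, let $\rho=P/N$, and let $A$ be a nonnegative random variable with a probability density function on $[0,\infty)$. For real $\alpha$ define the random variable $$J(\alpha,A)=\log\frac{P\left[A(P+Q)+N\right]}{(1-\alpha)^2APQ+(P+\alpha^2Q)N}.$$ Then for every $R\ge 0$, $$\min_{\alpha\in\mathbb{R}}\Pr\left[J(\alpha,A)\le R\right]=\Pr\left[A\le \frac{e^{R}-1}{\rho}\right],$$ and the minimum is attained at $\alpha^\ast=1-e^{-R}$. In particular this minimum equals the outage probability $\Pr[\log(1+A\rho)\le R]$ obtained when the decoder also knows the interference.
   Context: Interpretation: quasi-static channel $Y_i=\sqrt{A}(X_i+S_i)+Z_i$, $i=1,\dots,n$, with $Z_i$ i.i.d. $\mathcal{CN}(0,N)$, interference $S_i$ i.i.d. $\mathcal{CN}(0,Q)$ known noncausally to the encoder only, input average power constraint $P$, and a single fading coefficient $A$ (constant over the block, independent of $S$) known to the decoder but not the encoder. $J(\alpha,A)$ is the rate achieved, conditional on $A$, by dirty paper coding with $X\sim\mathcal{CN}(0,P)$ independent of $S$ and auxiliary variable $U=X+\alpha S$. Logarithms are natural. *)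

theory Defs
  imports "HOL-Probability.Probability"
begin

definition J :: "real \<Rightarrow> real \<Rightarrow> real \<Rightarrow> real \<Rightarrow> real \<Rightarrow> real" where
  "J P Q N \<alpha> a = ln ((P * (a * (P + Q) + N)) /
      ((1 - \<alpha>)\<^sup>2 * a * P * Q + (P + \<alpha>\<^sup>2 * Q) * N))"

end

theory Submission
  imports Defs
begin

text \<open>
  Completing the square in the DPC rate gives
  \<open>(N + aP) D - N P (a(P+Q) + N) = Q (aP(1-\<alpha>) - \<alpha>N)\<^sup>2 \<ge> 0\<close>, where \<open>D\<close> is the
  denominator of \<open>J\<close>; hence \<open>J(\<alpha>, a) \<le> log (1 + a\<rho>)\<close> for every \<open>\<alpha>\<close>, with equality
  exactly at the MMSE scaling \<open>\<alpha> = a\<rho>/(1 + a\<rho>)\<close>. So no \<open>\<alpha>\<close> can make the outage event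
  \<open>J(\<alpha>, A) \<le> R\<close> smaller than \<open>log (1 + A\<rho>) \<le> R\<close>, i.e. \<open>A \<le> (e\<^sup>R - 1)/\<rho>\<close>. The fixed
  choice \<open>\<alpha> = 1 - e\<^sup>-\<^sup>R\<close> is the MMSE scaling for the threshold fade \<open>a = (e\<^sup>R - 1)/\<rho>\<close>,
  and a direct computation shows that for it \<open>J \<le> R\<close> happens exactly when \<open>A\<close> is below
  that threshold, so it attains the bound.
\<close>

lemma J_le_ln_one_plus_snr:
  fixes P Q N \<alpha> a :: real
  assumes "P > 0" "Q > 0" "N > 0" "a \<ge> 0"
  shows "J P Q N \<alpha> a \<le> ln (1 + a * (P / N))"
proof -
  define D where "D = (1 - \<alpha>)\<^sup>2 * a * P * Q + (P + \<alpha>\<^sup>2 * Q) * N"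
  have D_pos: "D > 0"
    unfolding D_def using assms
    by (intro add_nonneg_pos) (auto intro!: mult_nonneg_nonneg mult_pos_pos add_pos_nonneg)
  have num_pos: "P * (a * (P + Q) + N) > 0"
    using assms by (auto intro!: mult_pos_pos add_nonneg_pos)
  have square: "(N + a * P) * D - N * (P * (a * (P + Q) + N)) = Q * (a * P * (1 - \<alpha>) - \<alpha> * N)\<^sup>2"
    unfolding D_def by (simp add: algebra_simps power2_eq_square)
  then have "N * (P * (a * (P + Q) + N)) \<le> (N + a * P) * D"
    using assms by (smt (verit) mult_nonneg_nonneg zero_le_power2)
  then have "P * (a * (P + Q) + N) / D \<le> 1 + a * (P / N)"
    using D_pos assms by (simp add: field_simps)
  then show ?thesis
    unfolding J_def D_def[symmetric] using D_pos num_pos by (intro ln_mono) auto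
qed

lemma ln_one_plus_le_iff:
  fixes a \<rho> R :: real
  assumes "a \<ge> 0" "\<rho> > 0"
  shows "ln (1 + a * \<rho>) \<le> R \<longleftrightarrow> a \<le> (exp R - 1) / \<rho>"
proof -
  have "1 + a * \<rho> > 0"
    using assms by (simp add: add_pos_nonneg)
  then have "ln (1 + a * \<rho>) \<le> R \<longleftrightarrow> 1 + a * \<rho> \<le> exp R"
    by (metis ln_exp ln_le_cancel_iff exp_gt_zero)
  also have "\<dots> \<longleftrightarrow> a \<le> (exp R - 1) / \<rho>"
    using assms by (simp add: field_simps)
  finally show ?thesis .
qed

lemma J_at_one_minus_exp_le_iff:
  fixes P Q N a R :: real
  assumes "P > 0" "Q > 0" "N > 0" "a \<ge> 0" "R \<ge> 0"
  shows "J P Q N (1 - exp (- R)) a \<le> R \<longleftrightarrow> a \<le> (exp R - 1) / (P / N)"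
proof -
  define e where "e = exp R"
  have e_ge_1: "e \<ge> 1"
    unfolding e_def using assms by simp
  have exp_minus_R: "exp (- R) = 1 / e"
    unfolding e_def by (simp add: exp_minus field_simps)
  define D where "D = (1 - (1 - exp (- R)))\<^sup>2 * a * P * Q + (P + (1 - exp (- R))\<^sup>2 * Q) * N"
  have D_pos: "D > 0"
    unfolding D_def using assms
    by (intro add_nonneg_pos) (auto intro!: mult_nonneg_nonneg mult_pos_pos add_pos_nonneg)
  have num_pos: "P * (a * (P + Q) + N) > 0"
    using assms by (auto intro!: mult_pos_pos add_nonneg_pos)
  have factor_pos: "P + Q * (1 - 1 / e) > 0"
    using assms e_ge_1 by (smt (verit) divide_le_eq_1 mult_nonneg_nonneg)
  have factorisation: "e * D - P * (a * (P + Q) + N) = (N * (e - 1) - a * P) * (P + Q * (1 - 1 / e))"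
    unfolding D_def exp_minus_R using e_ge_1 by (simp add: field_simps power2_eq_square)
  have "J P Q N (1 - exp (- R)) a \<le> R \<longleftrightarrow> P * (a * (P + Q) + N) / D \<le> e"
    unfolding J_def D_def[symmetric] e_def using D_pos num_pos
    by (subst ln_le_cancel_iff[symmetric]) auto
  also have "\<dots> \<longleftrightarrow> P * (a * (P + Q) + N) \<le> e * D"
    using D_pos by (simp add: field_simps)
  also have "\<dots> \<longleftrightarrow> 0 \<le> (N * (e - 1) - a * P) * (P + Q * (1 - 1 / e))"
    using factorisation by linarith
  also have "\<dots> \<longleftrightarrow> 0 \<le> N * (e - 1) - a * P"
    using factor_pos by (simp add: zero_le_mult_iff)
  also have "\<dots> \<longleftrightarrow> a \<le> (exp R - 1) / (P / N)"
    using assms unfolding e_def by (simp add: field_simps)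
  finally show ?thesis .
qed

lemma (in finite_measure) measure_le_le_mono:
  fixes g h :: "'a \<Rightarrow> real"
  assumes "g \<in> borel_measurable M" "\<And>x. x \<in> space M \<Longrightarrow> g x \<le> h x"
  shows "measure M {x \<in> space M. h x \<le> c} \<le> measure M {x \<in> space M. g x \<le> c}"
proof (rule finite_measure_mono)
  show "{x \<in> space M. g x \<le> c} \<in> sets M"
    using assms(1) by measurable
qed (use assms(2) in \<open>fastforce\<close>)

theorem mainTheorem2:
  fixes M :: "'s measure" and A :: "'s \<Rightarrow> real" and f :: "real \<Rightarrow> ennreal"
    and P Q N R :: real
  assumes "prob_space M"
    and "P > 0" and "Q > 0" and "N > 0"
    and "\<forall>x\<in>space M. A x \<ge> 0"
    and "distributed M lborel A f"
    and "\<forall>a<0. f a = 0"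
    and "R \<ge> 0"
  shows "(\<forall>\<alpha>::real. measure M {x \<in> space M. A x \<le> (exp R - 1) / (P / N)}
              \<le> measure M {x \<in> space M. J P Q N \<alpha> (A x) \<le> R})
       \<and> measure M {x \<in> space M. J P Q N (1 - exp (- R)) (A x) \<le> R}
           = measure M {x \<in> space M. A x \<le> (exp R - 1) / (P / N)}
       \<and> (INF \<alpha>::real. measure M {x \<in> space M. J P Q N \<alpha> (A x) \<le> R})
           = measure M {x \<in> space M. A x \<le> (exp R - 1) / (P / N)}
       \<and> measure M {x \<in> space M. A x \<le> (exp R - 1) / (P / N)}
           = measure M {x \<in> space M. ln (1 + A x * (P / N)) \<le> R}"
proof -
  interpret prob_space M by fact
  have A_meas: "A \<in> borel_measurable M"
    using distributed_measurable[OF assms(6)] by (simp add: measurable_lborel1)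
  have PN_pos: "P / N > 0"
    using assms(2,4) by simp
  have outage_eq: "{x \<in> space M. ln (1 + A x * (P / N)) \<le> R}
      = {x \<in> space M. A x \<le> (exp R - 1) / (P / N)}"
    using ln_one_plus_le_iff[OF _ PN_pos] assms(5) by auto
  have optimal_eq: "{x \<in> space M. J P Q N (1 - exp (- R)) (A x) \<le> R}
      = {x \<in> space M. A x \<le> (exp R - 1) / (P / N)}"
    using J_at_one_minus_exp_le_iff[OF assms(2-4) _ assms(8)] assms(5) by auto
  have lower_bound: "measure M {x \<in> space M. ln (1 + A x * (P / N)) \<le> R}
      \<le> measure M {x \<in> space M. J P Q N \<alpha> (A x) \<le> R}" for \<alpha>
    using A_meas J_le_ln_one_plus_snr[OF assms(2-4)] assms(5)
    by (intro measure_le_le_mono) (auto simp: J_def)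
  have "(INF \<alpha>::real. measure M {x \<in> space M. J P Q N \<alpha> (A x) \<le> R})
      = measure M {x \<in> space M. A x \<le> (exp R - 1) / (P / N)}"
    using lower_bound optimal_eq outage_eq
    by (intro cInf_eq_minimum[of _ "range _"]) (auto intro!: range_eqI[of _ _ "1 - exp (- R)"])
  then show ?thesis
    using lower_bound optimal_eq outage_eq by simp
qed

end
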